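(* Suppose $\pi$ is a QSD of $(X_t)_{0\le t<\tau_\partial}$ with $\pi\in\mathcal P_\infty(\Lambda)$, and that the adjoint Dobrushin condition (AD) holds with function $\psi$, time $t_0$, constant $c_0'>0$ and probability measure $\nu'$. Then $\nu'\ll\Lambda$, $\nu'(\frac{d\pi}{d\Lambda})>0$, and $(X_t)$ and $\pi$ satisfy the reverse Dobrushin condition (RD) with the same time $t_0$, the constant $$c_0:=\frac{c_0'\,\nu'(\frac{d\pi}{d\Lambda})}{\|\psi\|_\infty\|1/\psi\|_\infty\|\frac{d\pi}{d\Lambda}\|_{L^\infty(\Lambda)}}\in(0,1],$$ and the probability measure $\nu:=\frac{\frac{d\pi}{d\Lambda}\nu'}{\nu'(\frac{d\pi}{d\Lambda})}$.
   Context: $\chi$ is a metric space with Borel $\sigma$-algebra, equipped with a distinguished $\sigma$-finite Borel measure $\Lambda$ of full support. $(X_t)_{0\le t<\tau_\partial}$ is a killed Markov process on $\chi$ (discrete or continuous time) with absorption time $\tau_\partial$, submarkovian semigroup $P_t(x,A)=\mathbb P_x(X_t\in A,\tau_\partial>t)$; $K1(x)=K(x,\chi)$. A QSD is a probability measure $\pi$ with $\mathbb P_\pi(X_t\in\cdot\mid\tau_\partial>t)=\pi$ for all $t$. $\mathcal P_\infty(\Lambda)$ = probability measures $\ll\Lambda$ with density in $L^\infty(\Lambda)$; for a measure $m$ and function $f$, $fm$ denotes the measure $f\,dm$. $\mathcal B_{b,\gg}(\chi)$ = bounded Borel functions with strictly positive infimum. (AD) Adjoint Dobrushin condition: there exist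 $\psi\in\mathcal B_{b,\gg}(\chi)$, $t_0>0$, $a>0$ and a submarkovian kernel $\tilde P$ with $\psi(x)\Lambda(dx)P_{t_0}(x,dy)=a\psi(y)\Lambda(dy)\tilde P(y,dx)$ as measures on $\chi\times\chi$, $\tilde P1(y)>0$ for $\Lambda$-a.e. $y$, and there exist $c_0'>0$ and $\nu'\in\mathcal P(\chi)$, not mutually singular with $\pi$, such that $\tilde P(y,\cdot)/\tilde P1(y)\ge c_0'\nu'(\cdot)$ for $\Lambda$-a.e. $y$. (RD): there exist $t_0>0$ and a submarkovian kernel $R$ with $\pi(dx)P_{t_0}(x,dy)=\pi(dy)R(y,dx)$, and $c_0>0$, $\nu\in\mathcal P(\chi)$ with $R(y,\cdot)/R1(y)\ge c_0\nu$ for $\pi$-a.e. $y$. *)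

theory Defs
  imports "HOL-Probability.Probability"
begin

definition mutually_singular :: "'a measure \<Rightarrow> 'a measure \<Rightarrow> bool" where
  "mutually_singular M N \<longleftrightarrow>
     (\<exists>A\<in>sets M. emeasure M A = 0 \<and> emeasure N (space N - A) = 0)"

definition submarkov_kernel :: "('a::topological_space \<Rightarrow> 'a measure) \<Rightarrow> bool" where
  "submarkov_kernel K \<longleftrightarrow> K \<in> borel \<rightarrow>\<^sub>M subprob_algebra borel"

definition reverse_dobrushin ::
  "('a::topological_space \<Rightarrow> 'a measure) \<Rightarrow> 'a measure \<Rightarrow> real \<Rightarrow> 'a measure \<Rightarrow> bool" where
  "reverse_dobrushin Pt0 qsd c0 nu \<longleftrightarrow>
     (\<exists>R. submarkov_kernel R \<and>
        (\<forall>C\<in>sets (borel \<Otimes>\<^sub>M borel).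
           (\<integral>\<^sup>+x. (\<integral>\<^sup>+y. indicator C (x,y) \<partial>Pt0 x) \<partial>qsd)
         = (\<integral>\<^sup>+y. (\<integral>\<^sup>+x. indicator C (x,y) \<partial>R y) \<partial>qsd)) \<and>
        (AE y in qsd. \<forall>A\<in>sets borel.
           measure (R y) A / measure (R y) UNIV \<ge> c0 * measure nu A))"

end

theory Submission
  imports Defs
begin

text \<open>
  Write \<open>\<pi> = f \<Lambda>\<close>. Multiplying the adjoint relation \<open>\<psi>(x) \<Lambda>(dx) P(x,dy) = a \<psi>(y) \<Lambda>(dy) P\<^sup>~(y,dx)\<close>
  by \<open>f(x)/\<psi>(x)\<close> gives \<open>\<pi>(dx) P(x,dy) = \<pi>(dy) R(y,dx)\<close> for
  \<open>R(y,dx) = a \<psi>(y) f(x) / (f(y) \<psi>(x)) P\<^sup>~(y,dx)\<close>. Testing this with product sets \<open>\<chi> \<times> A\<close> and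
  using quasi-stationarity \<open>\<pi>P = \<lambda>\<pi>\<close>, \<open>\<lambda> \<le> 1\<close>, shows that \<open>R\<close> is sub-Markovian \<open>\<pi>\<close>-almost everywhere.
  The normalised \<open>R(y,\<cdot>)\<close> has \<open>P\<^sup>~(y,\<cdot>)\<close>-density proportional to \<open>f/\<psi>\<close>, which is at most
  \<open>\<parallel>f\<parallel>\<^sub>\<infinity> \<parallel>1/\<psi>\<parallel>\<^sub>\<infinity>\<close>, while the minorisation \<open>P\<^sup>~(y,\<cdot>) \<ge> c\<^sub>0' P\<^sup>~(y,\<chi>) \<nu>'\<close> bounds its integral over
  \<open>A\<close> from below by \<open>c\<^sub>0' P\<^sup>~(y,\<chi>) \<nu>'(f 1\<^sub>A) / \<parallel>\<psi>\<parallel>\<^sub>\<infinity>\<close>; the quotient of the two bounds is \<open>c\<^sub>0 \<nu>(A)\<close>.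
  The same minorisation carries \<open>\<Lambda>\<close>-null sets to \<open>\<nu>'\<close>-null sets, and \<open>\<nu>'(f) > 0\<close> because \<open>\<nu>'\<close> is
  not singular with respect to \<open>\<pi>\<close>.
\<close>

section \<open>Integration against weighted kernels\<close>

definition kernel_integral ::
  "'a measure \<Rightarrow> ('a \<Rightarrow> ennreal) \<Rightarrow> ('a \<Rightarrow> 'b measure) \<Rightarrow> ('a \<times> 'b \<Rightarrow> ennreal) \<Rightarrow> ennreal" where
  "kernel_integral M u K g = (\<integral>\<^sup>+x. u x * (\<integral>\<^sup>+y. g (x, y) \<partial>K x) \<partial>M)"

lemma measurable_kernel_nn_integral:
  assumes "K \<in> A \<rightarrow>\<^sub>M subprob_algebra B" "g \<in> borel_measurable (A \<Otimes>\<^sub>M B)"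
  shows "(\<lambda>x. \<integral>\<^sup>+y. g (x, y) \<partial>K x) \<in> borel_measurable A"
  using nn_integral_measurable_subprob_algebra2[where f="\<lambda>x y. g (x, y)", OF _ assms(1)] assms(2) by simp

context
  fixes M A :: "'a measure" and B :: "'b measure" and u :: "'a \<Rightarrow> ennreal" and K :: "'a \<Rightarrow> 'b measure"
  assumes sets_M: "sets M = sets A"
    and u[measurable]: "u \<in> borel_measurable A"
    and K[measurable]: "K \<in> A \<rightarrow>\<^sub>M subprob_algebra B"
begin

declare measurable_kernel_nn_integral[OF K, measurable]

lemma kernel_integral_cong:
  assumes "\<And>z. z \<in> space A \<times> space B \<Longrightarrow> g z = h z"
  shows "kernel_integral M u K g = kernel_integral M u K h"
  unfolding kernel_integral_def using assms subprob_measurableD(1)[OF K] sets_eq_imp_space_eq[OF sets_M]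
  by (intro nn_integral_cong arg_cong2[where f="(*)"] refl) auto

lemma kernel_integral_mult_fst:
  assumes [measurable]: "k \<in> borel_measurable A" "g \<in> borel_measurable (A \<Otimes>\<^sub>M B)"
  shows "kernel_integral M u K (\<lambda>z. k (fst z) * g z) = kernel_integral M (\<lambda>x. u x * k x) K g"
  unfolding kernel_integral_def using sets_eq_imp_space_eq[OF sets_M]
  by (intro nn_integral_cong) (simp add: nn_integral_cmult mult.assoc)

lemma kernel_integral_cmult:
  assumes [measurable]: "g \<in> borel_measurable (A \<Otimes>\<^sub>M B)"
  shows "kernel_integral M u K (\<lambda>z. c * g z) = c * kernel_integral M u K g"
proof -
  have "kernel_integral M u K (\<lambda>z. c * g z) = (\<integral>\<^sup>+x. c * (u x * (\<integral>\<^sup>+y. g (x, y) \<partial>K x)) \<partial>M)"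
    unfolding kernel_integral_def
    by (intro nn_integral_cong) (simp add: sets_eq_imp_space_eq[OF sets_M] nn_integral_cmult mult.left_commute)
  then show ?thesis
    unfolding kernel_integral_def by (simp add: nn_integral_cmult measurable_cong_sets[OF sets_M refl])
qed

lemma kernel_integral_add:
  assumes [measurable]: "g \<in> borel_measurable (A \<Otimes>\<^sub>M B)" "h \<in> borel_measurable (A \<Otimes>\<^sub>M B)"
  shows "kernel_integral M u K (\<lambda>z. g z + h z) = kernel_integral M u K g + kernel_integral M u K h"
proof -
  have "kernel_integral M u K (\<lambda>z. g z + h z)
      = (\<integral>\<^sup>+x. u x * (\<integral>\<^sup>+y. g (x, y) \<partial>K x) + u x * (\<integral>\<^sup>+y. h (x, y) \<partial>K x) \<partial>M)"
    unfolding kernel_integral_def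
    by (intro nn_integral_cong) (simp add: sets_eq_imp_space_eq[OF sets_M] nn_integral_add distrib_left)
  then show ?thesis
    unfolding kernel_integral_def by (simp add: nn_integral_add measurable_cong_sets[OF sets_M refl])
qed

lemma kernel_integral_SUP:
  assumes [measurable]: "\<And>i. G i \<in> borel_measurable (A \<Otimes>\<^sub>M B)" and "incseq G"
  shows "kernel_integral M u K (\<lambda>z. SUP i. G i z) = (SUP i. kernel_integral M u K (G i))"
proof -
  have inc: "incseq (\<lambda>i y. G i (x, y))" for x
    using \<open>incseq G\<close> by (auto simp: incseq_def le_fun_def)
  have "kernel_integral M u K (\<lambda>z. SUP i. G i z) = (\<integral>\<^sup>+x. (SUP i. u x * (\<integral>\<^sup>+y. G i (x, y) \<partial>K x)) \<partial>M)"
    unfolding kernel_integral_def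
    by (intro nn_integral_cong)
       (simp add: sets_eq_imp_space_eq[OF sets_M] nn_integral_monotone_convergence_SUP[OF inc] SUP_mult_left_ennreal image_comp)
  also have "\<dots> = (SUP i. kernel_integral M u K (G i))"
    unfolding kernel_integral_def
  proof (rule nn_integral_monotone_convergence_SUP)
    show "incseq (\<lambda>i x. u x * (\<integral>\<^sup>+y. G i (x, y) \<partial>K x))"
      using inc by (auto simp: incseq_def le_fun_def intro!: mult_left_mono nn_integral_mono)
  qed (simp add: measurable_cong_sets[OF sets_M refl])
  finally show ?thesis .
qed

end

lemma measurable_comp_swap[measurable]:
  "g \<in> borel_measurable (A \<Otimes>\<^sub>M B) \<Longrightarrow> (\<lambda>z. g (prod.swap z)) \<in> borel_measurable (B \<Otimes>\<^sub>M A)"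
  using measurable_comp[OF measurable_pair_swap' [of B A]] by (simp add: o_def case_prod_unfold prod.swap_def)

lemma kernel_integral_adjoint:
  assumes sets_M: "sets M = sets A"
    and [measurable]: "u \<in> borel_measurable A" "v \<in> borel_measurable A"
      "K \<in> A \<rightarrow>\<^sub>M subprob_algebra A" "L \<in> A \<rightarrow>\<^sub>M subprob_algebra A"
    and adjoint: "\<And>C. C \<in> sets (A \<Otimes>\<^sub>M A) \<Longrightarrow>
      kernel_integral M u K (indicator C) = kernel_integral M v L (\<lambda>z. indicator C (prod.swap z))"
    and g: "g \<in> borel_measurable (A \<Otimes>\<^sub>M A)"
  shows "kernel_integral M u K g = kernel_integral M v L (\<lambda>z. g (prod.swap z))"
  using g
proof induction
  case (cong f g)
  have "kernel_integral M u K f = kernel_integral M u K g"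
    using cong(3) by (intro kernel_integral_cong[OF sets_M]) (auto simp: space_pair_measure)
  moreover have "kernel_integral M v L (\<lambda>z. f (prod.swap z)) = kernel_integral M v L (\<lambda>z. g (prod.swap z))"
    using cong(3) by (intro kernel_integral_cong[OF sets_M, where B=A]) (auto simp: space_pair_measure)
  ultimately show ?case using cong(4) by simp
next
  case (set C)
  then show ?case by (rule adjoint)
next
  case (mult g c)
  note [measurable] = \<open>g \<in> borel_measurable (A \<Otimes>\<^sub>M A)\<close>
  have "(\<lambda>z. g (prod.swap z)) \<in> borel_measurable (A \<Otimes>\<^sub>M A)"
    by simp
  then show ?case
    using mult kernel_integral_cmult[OF sets_M, of v L A "\<lambda>z. g (prod.swap z)" c]
      kernel_integral_cmult[OF sets_M, of u K A g c]
    by simp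
next
  case (add g h)
  note [measurable] = \<open>g \<in> borel_measurable (A \<Otimes>\<^sub>M A)\<close> \<open>h \<in> borel_measurable (A \<Otimes>\<^sub>M A)\<close>
  have "(\<lambda>z. g (prod.swap z)) \<in> borel_measurable (A \<Otimes>\<^sub>M A)"
    "(\<lambda>z. h (prod.swap z)) \<in> borel_measurable (A \<Otimes>\<^sub>M A)"
    by simp_all
  then show ?case
    using add kernel_integral_add[OF sets_M, of v L A "\<lambda>z. h (prod.swap z)" "\<lambda>z. g (prod.swap z)"]
      kernel_integral_add[OF sets_M, of u K A h g]
    by simp
next
  case (seq G)
  note [measurable] = seq(1)
  have "incseq (\<lambda>i z. G i (prod.swap z))"
    using \<open>incseq G\<close> by (auto simp: incseq_def le_fun_def)
  then have "kernel_integral M v L (\<lambda>z. SUP i. G i (prod.swap z))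
      = (SUP i. kernel_integral M v L (\<lambda>z. G i (prod.swap z)))"
    using kernel_integral_SUP[OF sets_M, of v L A "\<lambda>i z. G i (prod.swap z)"] by simp
  moreover have "g = (\<lambda>z. SUP i. G i z)"
    using \<open>g = (SUP i. G i)\<close> by (simp add: fun_eq_iff image_comp)
  ultimately show ?case
    using seq kernel_integral_SUP[OF sets_M, of u K A G] by simp
qed


lemma AE_kernel_null_if_adjoint:
  assumes sets_M: "sets M = sets A"
    and [measurable]: "u \<in> borel_measurable A" "v \<in> borel_measurable A"
      "K \<in> A \<rightarrow>\<^sub>M subprob_algebra A" "L \<in> A \<rightarrow>\<^sub>M subprob_algebra A"
    and adjoint: "\<And>C. C \<in> sets (A \<Otimes>\<^sub>M A) \<Longrightarrow>
      kernel_integral M u K (indicator C) = kernel_integral M v L (\<lambda>z. indicator C (prod.swap z))"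
    and v_pos: "\<And>y. y \<in> space A \<Longrightarrow> v y \<noteq> 0"
    and N: "N \<in> null_sets M"
  shows "AE y in M. emeasure (L y) N = 0"
proof -
  have N_sets[measurable]: "N \<in> sets A"
    using N sets_M by auto
  have space_M: "space M = space A"
    using sets_eq_imp_space_eq[OF sets_M] .
  have "0 = kernel_integral M u K (indicator (N \<times> space A))"
    unfolding kernel_integral_def
    using AE_not_in[OF N] by (intro nn_integral_zero'[symmetric]) (auto simp: indicator_def)
  also have "\<dots> = kernel_integral M v L (\<lambda>z. indicator (N \<times> space A) (prod.swap z))"
    by (rule adjoint) simp
  also have "\<dots> = (\<integral>\<^sup>+y. v y * emeasure (L y) N \<partial>M)"
    unfolding kernel_integral_def
    by (intro nn_integral_cong) (auto simp: space_M indicator_times sets_kernel[of L A A])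
  finally have "AE y in M. v y * emeasure (L y) N = 0"
    by (subst (asm) eq_commute, subst (asm) nn_integral_0_iff_AE)
       (simp_all add: measurable_cong_sets[OF sets_M refl])
  then show ?thesis
    using v_pos by (auto simp: space_M elim: AE_mp[OF AE_space])
qed

section \<open>Minorisation and densities\<close>

lemma AE_imp_ex:
  assumes "emeasure M (space M) \<noteq> 0" and "AE x in M. P x"
  shows "\<exists>x\<in>space M. P x"
proof (rule ccontr)
  assume none: "\<not> (\<exists>x\<in>space M. P x)"
  have "AE x in M. False"
    using assms(2) AE_space by eventually_elim (use none in blast)
  then have "ae_filter M = bot"
    by (simp add: eventually_False)
  with assms(1) show False
    by (simp add: ae_filter_eq_bot_iff)
qed

lemma integral_pos_if_not_mutually_singular:
  fixes f :: "'a \<Rightarrow> real"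
  assumes sets_N: "sets N = sets M" and f[measurable]: "f \<in> borel_measurable M"
    and f_nonneg: "\<And>x. 0 \<le> f x" and "integrable N f"
    and not_singular: "\<not> mutually_singular N (density M f)"
  shows "0 < (\<integral>x. f x \<partial>N)"
proof (rule ccontr)
  let ?S = "{x\<in>space M. 0 < f x}"
  have S: "?S \<in> sets N"
    using sets_N by simp
  assume "\<not> 0 < (\<integral>x. f x \<partial>N)"
  moreover have "0 \<le> (\<integral>x. f x \<partial>N)"
    by (rule Bochner_Integration.integral_nonneg) (rule f_nonneg)
  ultimately have "(\<integral>x. f x \<partial>N) = 0"
    by simp
  then have "AE x in N. f x = 0"
    using integral_nonneg_eq_0_iff_AE[OF \<open>integrable N f\<close>] f_nonneg by simp
  then have "AE x in N. \<not> 0 < f x"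
    by (rule eventually_mono) simp
  moreover have "{x\<in>space N. \<not> \<not> 0 < f x} = ?S"
    using sets_eq_imp_space_eq[OF sets_N] by simp
  ultimately have null: "emeasure N ?S = 0"
    using AE_iff_measurable[OF S] by simp
  have "emeasure (density M f) (space (density M f) - ?S) = (\<integral>\<^sup>+x\<in>space M - ?S. f x \<partial>M)"
    by (simp add: emeasure_density)
  also have "\<dots> = 0"
    using f_nonneg by (intro nn_integral_zero' AE_I2) (auto simp: indicator_def intro: antisym)
  finally have "emeasure (density M f) (space (density M f) - ?S) = 0" .
  with S null have "mutually_singular N (density M f)"
    unfolding mutually_singular_def by (intro bexI[of _ ?S] conjI)
  with not_singular show False ..
qed

lemma prob_space_density_normalized:
  fixes f :: "'a \<Rightarrow> real"
  assumes "prob_space N" and [measurable]: "f \<in> borel_measurable N"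
    and "\<And>x. 0 \<le> f x" and "integrable N f" and "0 < (\<integral>x. f x \<partial>N)"
  shows "prob_space (density N (\<lambda>x. f x / (\<integral>x. f x \<partial>N)))"
proof (rule prob_spaceI)
  have "emeasure (density N (\<lambda>x. f x / (\<integral>x. f x \<partial>N))) (space N)
      = ennreal (\<integral>x. f x / (\<integral>x. f x \<partial>N) \<partial>N)"
    using assms by (simp add: emeasure_density nn_integral_eq_integral)
  also have "\<dots> = 1"
    using assms(5) by simp
  finally show "emeasure (density N (\<lambda>x. f x / (\<integral>x. f x \<partial>N))) (space (density N (\<lambda>x. f x / (\<integral>x. f x \<partial>N)))) = 1"
    by simp
qed

lemma absolutely_continuous_if_minorized:
  assumes "emeasure M (space M) \<noteq> 0" and "finite_measure \<nu>" and sets_\<nu>: "sets \<nu> = sets M"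
    and null: "\<And>N. N \<in> null_sets M \<Longrightarrow> AE y in M. emeasure (L y) N = 0"
    and minor: "AE y in M. \<forall>A\<in>sets \<nu>. c * measure \<nu> A \<le> measure (L y) A / measure (L y) (space (L y))"
    and "0 < c"
  shows "absolutely_continuous M \<nu>"
  unfolding absolutely_continuous_def
proof
  fix N assume N: "N \<in> null_sets M"
  obtain y where "emeasure (L y) N = 0"
      and "\<forall>A\<in>sets \<nu>. c * measure \<nu> A \<le> measure (L y) A / measure (L y) (space (L y))"
    using AE_imp_ex[OF assms(1) AE_conjI[OF null[OF N] minor]] by blast
  moreover have "N \<in> sets \<nu>"
    using N sets_\<nu> by auto
  ultimately have "c * measure \<nu> N \<le> 0"
    by (auto simp: measure_def)
  then have "measure \<nu> N = 0"
    using \<open>0 < c\<close> by (simp add: mult_le_0_iff measure_le_0_iff)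
  then show "N \<in> null_sets \<nu>"
    using \<open>N \<in> sets \<nu>\<close> \<open>finite_measure \<nu>\<close> by (simp add: finite_measure.emeasure_eq_measure null_sets_def)
qed

lemma minorization_constant_le_1:
  assumes "prob_space \<nu>" and "finite_measure Q" and "sets \<nu> = sets Q"
    and "0 < measure Q (space Q)"
    and "\<forall>A\<in>sets Q. c * measure \<nu> A \<le> measure Q A / measure Q (space Q)"
  shows "c \<le> 1"
proof -
  have "c * measure \<nu> (space Q) \<le> 1"
    using bspec[OF assms(5) sets.top] assms(4) by simp
  moreover have "measure \<nu> (space Q) = 1"
    using prob_space.prob_space[OF assms(1)] sets_eq_imp_space_eq[OF assms(3)] by simp
  ultimately show ?thesis
    by simp
qed

lemma ratio_le_of_bounds:
  fixes c p L X Y B k :: real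
  assumes "0 < p" "0 \<le> k" "0 \<le> X" "X \<le> Y" "Y \<le> B * p" "c * p * L \<le> k * X"
  shows "c * L \<le> k * B * (X / Y)"
proof (cases "Y = 0")
  case True
  then show ?thesis
    using assms by (simp add: mult.assoc mult_le_0_iff zero_le_mult_iff)
next
  case False
  then have "0 < Y"
    using assms by simp
  have "c * L \<le> k * X / p"
    using assms by (simp add: field_simps)
  also have "\<dots> = (k * X) * (1 / p)"
    by simp
  also have "\<dots> \<le> (k * X) * (B / Y)"
    using assms \<open>0 < Y\<close> by (intro mult_left_mono) (simp_all add: divide_simps mult.commute)
  finally show ?thesis
    by (simp add: mult_ac)
qed

lemma nn_integral_le_if_minorized:
  assumes Q: "finite_measure Q" and \<nu>: "finite_measure \<nu>" and sets_\<nu>: "sets \<nu> = sets Q"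
    and minor: "\<And>A. A \<in> sets Q \<Longrightarrow> c * measure \<nu> A \<le> measure Q A / measure Q (space Q)"
    and Q_pos: "0 < measure Q (space Q)" and "0 < c"
    and g: "g \<in> borel_measurable Q"
  shows "ennreal (c * measure Q (space Q)) * (\<integral>\<^sup>+x. g x \<partial>\<nu>) \<le> (\<integral>\<^sup>+x. g x \<partial>Q)"
proof -
  interpret Q: finite_measure Q by (rule Q)
  interpret \<nu>: finite_measure \<nu> by (rule \<nu>)
  let ?p = "measure Q (space Q)"
  have le_sets: "emeasure (scale_measure (ennreal (c * ?p)) \<nu>) C \<le> emeasure Q C" if "C \<in> sets Q" for C
  proof -
    have "c * ?p * measure \<nu> C \<le> measure Q C"
      using minor[OF that] Q_pos by (simp add: field_simps)
    then show ?thesis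
      using \<open>0 < c\<close> Q_pos
      by (simp add: \<nu>.emeasure_eq_measure Q.emeasure_eq_measure ennreal_mult''[symmetric])
  qed
  have "emeasure (scale_measure (ennreal (c * ?p)) \<nu>) C \<le> emeasure Q C" for C
    using le_sets[of C] sets_\<nu> by (cases "C \<in> sets Q") (simp_all add: emeasure_notin_sets)
  then have "scale_measure (ennreal (c * ?p)) \<nu> \<le> Q"
    using sets_\<nu> sets_eq_imp_space_eq[OF sets_\<nu>] by (simp add: le_measure_iff le_fun_def space_scale_measure)
  then show ?thesis
    using g by (subst nn_integral_scale_measure[symmetric])
      (auto intro!: nn_integral_mono_measure simp: sets_\<nu> measurable_cong_sets[OF sets_\<nu> refl])
qed

lemma density_ratio_ge_if_minorized:
  fixes Q \<nu> :: "'a measure" and l h :: "'a \<Rightarrow> real"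
  assumes Q: "finite_measure Q" and \<nu>: "finite_measure \<nu>" and sets_\<nu>: "sets \<nu> = sets Q"
    and minor: "\<And>A. A \<in> sets Q \<Longrightarrow> c * measure \<nu> A \<le> measure Q A / measure Q (space Q)"
    and Q_pos: "0 < measure Q (space Q)" and "0 < c" and "0 < k"
    and [measurable]: "l \<in> borel_measurable Q" "h \<in> borel_measurable Q"
    and l_le: "\<And>x. l x \<le> k * h x"
    and h_bound: "AE x in Q. h x \<le> B" and "0 \<le> B"
    and A[measurable]: "A \<in> sets Q"
  shows "c * measure (density \<nu> l) A \<le> k * B * (measure (density Q h) A / measure (density Q h) (space Q))"
proof -
  interpret Q: finite_measure Q by (rule Q)
  define p where "p = measure Q (space Q)"
  define Il where "Il = (\<integral>\<^sup>+x. ennreal (l x) * indicator A x \<partial>\<nu>)"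
  define IA where "IA = (\<integral>\<^sup>+x. ennreal (h x) * indicator A x \<partial>Q)"
  define IS where "IS = (\<integral>\<^sup>+x. h x \<partial>Q)"
  have "ennreal (c * p) * Il \<le> (\<integral>\<^sup>+x. ennreal (l x) * indicator A x \<partial>Q)"
    unfolding Il_def p_def by (rule nn_integral_le_if_minorized[OF Q \<nu> sets_\<nu> minor Q_pos \<open>0 < c\<close>]) simp_all
  also have "\<dots> \<le> (\<integral>\<^sup>+x. ennreal k * (ennreal (h x) * indicator A x) \<partial>Q)"
    using l_le \<open>0 < k\<close>
    by (intro nn_integral_mono) (auto simp: indicator_def ennreal_mult'[symmetric] intro: ennreal_leI)
  also have "\<dots> = ennreal k * IA"
    unfolding IA_def by (rule nn_integral_cmult) simp
  finally have low: "ennreal (c * p) * Il \<le> ennreal k * IA" .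
  have "IS \<le> (\<integral>\<^sup>+x. ennreal B \<partial>Q)"
    unfolding IS_def using h_bound by (intro nn_integral_mono_AE) (auto elim: eventually_mono intro: ennreal_leI)
  then have IS_le: "IS \<le> ennreal B * ennreal p"
    by (simp add: Q.emeasure_eq_measure p_def)
  have IA_le: "IA \<le> IS"
    unfolding IA_def IS_def by (intro nn_integral_mono) (auto simp: indicator_def)
  have IS_fin: "IS < \<top>"
    using IS_le by (rule le_less_trans) (simp add: ennreal_mult_less_top)
  have IA_fin: "IA < \<top>"
    using IA_le IS_fin by (rule le_less_trans)
  have "c * p * enn2real Il \<le> k * enn2real IA"
    using enn2real_mono[OF low] IA_fin \<open>0 < c\<close> \<open>0 < k\<close> Q_pos
    by (simp add: p_def enn2real_mult ennreal_mult_less_top)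
  moreover have "enn2real IS \<le> B * p"
    using enn2real_mono[OF IS_le] \<open>0 \<le> B\<close> Q_pos by (simp add: p_def enn2real_mult ennreal_mult_less_top)
  moreover have "enn2real IA \<le> enn2real IS"
    using IA_le IS_fin by (simp add: enn2real_mono)
  ultimately have "c * enn2real Il \<le> k * B * (enn2real IA / enn2real IS)"
    using Q_pos \<open>0 < k\<close> by (intro ratio_le_of_bounds[where p=p]) (simp_all add: p_def)
  then show ?thesis
    using sets_\<nu> by (simp add: measure_def emeasure_density Il_def IA_def IS_def)
qed

section \<open>The reversed kernel\<close>

text \<open>
  The guard, which makes every
  \<open>R(y,\<cdot>)\<close> a sub-probability, holds almost everywhere on \<open>{f > 0}\<close> under the balance
  \<open>w(y) \<integral>h dL(y,\<cdot>) = \<lambda> f(y)\<close> with \<open>\<lambda> \<le> 1\<close> established below; elsewhere the kernel is set to zero.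
\<close>

definition reversed_kernel ::
  "('a \<Rightarrow> 'b measure) \<Rightarrow> ('a \<Rightarrow> real) \<Rightarrow> ('b \<Rightarrow> real) \<Rightarrow> ('a \<Rightarrow> real) \<Rightarrow> 'a \<Rightarrow> 'b measure" where
  "reversed_kernel L w h f y =
     (if 0 < f y \<and> ennreal (w y) * (\<integral>\<^sup>+x. h x \<partial>L y) \<le> f y
      then density (L y) (\<lambda>x. ennreal (w y / f y) * ennreal (h x))
      else null_measure (L y))"

lemma sets_reversed_kernel [simp]: "sets (reversed_kernel L w h f y) = sets (L y)"
  by (simp add: reversed_kernel_def)

lemma nn_integral_reversed_kernel:
  assumes "0 < f y" "ennreal (w y) * (\<integral>\<^sup>+x. h x \<partial>L y) \<le> f y"
    and "g \<in> borel_measurable (L y)" "h \<in> borel_measurable (L y)"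
  shows "(\<integral>\<^sup>+x. g x \<partial>reversed_kernel L w h f y) = ennreal (w y / f y) * (\<integral>\<^sup>+x. h x * g x \<partial>L y)"
proof -
  note [measurable] = assms(3,4)
  have "(\<integral>\<^sup>+x. g x \<partial>reversed_kernel L w h f y)
      = (\<integral>\<^sup>+x. ennreal (w y / f y) * (ennreal (h x) * g x) \<partial>L y)"
    using assms(1,2) by (simp add: reversed_kernel_def nn_integral_density mult.assoc)
  also have "\<dots> = ennreal (w y / f y) * (\<integral>\<^sup>+x. h x * g x \<partial>L y)"
    by (rule nn_integral_cmult) measurable
  finally show ?thesis .
qed

lemma emeasure_reversed_kernel:
  assumes "A \<in> sets (L y)" and "h \<in> borel_measurable (L y)"
  shows "emeasure (reversed_kernel L w h f y) A
    = (if 0 < f y \<and> ennreal (w y) * (\<integral>\<^sup>+x. h x \<partial>L y) \<le> f y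
       then ennreal (w y / f y) * (\<integral>\<^sup>+x. ennreal (h x) * indicator A x \<partial>L y) else 0)"
proof (cases "0 < f y \<and> ennreal (w y) * (\<integral>\<^sup>+x. h x \<partial>L y) \<le> f y")
  case True
  then show ?thesis
    using assms nn_integral_reversed_kernel[of f y w L h "indicator A"] by simp
qed (auto simp: reversed_kernel_def)

lemma subprob_space_reversed_kernel:
  assumes "subprob_space (L y)" and h: "h \<in> borel_measurable (L y)"
  shows "subprob_space (reversed_kernel L w h f y)"
proof (cases "0 < f y \<and> ennreal (w y) * (\<integral>\<^sup>+x. h x \<partial>L y) \<le> f y")
  case True
  have space_R: "space (reversed_kernel L w h f y) = space (L y)"
    using sets_eq_imp_space_eq[OF sets_reversed_kernel] .
  have "ennreal (f y) * emeasure (reversed_kernel L w h f y) (space (L y))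
      = ennreal (f y) * ennreal (w y / f y) * (\<integral>\<^sup>+x. h x \<partial>L y)"
    using True emeasure_reversed_kernel[where L=L and y=y, OF sets.top h] by (simp add: mult.assoc)
  also have "\<dots> \<le> ennreal (f y) * 1"
    using True by (simp add: ennreal_mult'[symmetric])
  finally have "emeasure (reversed_kernel L w h f y) (space (L y)) \<le> 1"
    using True by (subst (asm) ennreal_mult_le_mult_iff) auto
  then show ?thesis
    using subprob_space.subprob_not_empty[OF assms(1)] by (intro subprob_spaceI) (simp_all add: space_R)
next
  case False
  then have "reversed_kernel L w h f y = null_measure (L y)"
    unfolding reversed_kernel_def by argo
  then show ?thesis
    using subprob_space.subprob_not_empty[OF assms(1)] by (simp add: subprob_space_null_measure)
qed

lemma measurable_reversed_kernel:
  assumes L[measurable]: "L \<in> M \<rightarrow>\<^sub>M subprob_algebra N"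
    and [measurable]: "w \<in> borel_measurable M" "f \<in> borel_measurable M" "h \<in> borel_measurable N"
  shows "reversed_kernel L w h f \<in> M \<rightarrow>\<^sub>M subprob_algebra N"
proof (rule measurable_subprob_algebra)
  fix y assume y: "y \<in> space M"
  have h_L: "h \<in> borel_measurable (L y)"
    unfolding subprob_measurableD(3)[OF L y] by (rule assms(4))
  show "subprob_space (reversed_kernel L w h f y)"
    using subprob_space_kernel[OF L y] h_L by (rule subprob_space_reversed_kernel)
  show "sets (reversed_kernel L w h f y) = sets N"
    using sets_kernel[OF L y] by simp
next
  fix A assume A[measurable]: "A \<in> sets N"
  have [measurable]: "(\<lambda>y. \<integral>\<^sup>+x. h x \<partial>L y) \<in> borel_measurable M"
    "(\<lambda>y. \<integral>\<^sup>+x. h x * indicator A x \<partial>L y) \<in> borel_measurable M"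
    by (rule nn_integral_measurable_subprob_algebra2[OF _ L]; measurable)+
  have "(\<lambda>y. if 0 < f y \<and> ennreal (w y) * (\<integral>\<^sup>+x. h x \<partial>L y) \<le> f y
      then ennreal (w y / f y) * (\<integral>\<^sup>+x. ennreal (h x) * indicator A x \<partial>L y) else 0) \<in> borel_measurable M"
    by measurable
  then show "(\<lambda>y. emeasure (reversed_kernel L w h f y) A) \<in> borel_measurable M"
    using sets_kernel[OF L] subprob_measurableD(3)[OF L]
    by (subst measurable_cong[OF emeasure_reversed_kernel]) simp_all
qed

lemma reversed_kernel_balance:
  fixes lam :: ennreal
  assumes balance: "ennreal (w y) * (\<integral>\<^sup>+x. h x \<partial>L y) = lam * f y" and "lam \<le> 1" and "0 \<le> f y"
    and [measurable]: "g \<in> borel_measurable (L y)" "h \<in> borel_measurable (L y)"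
  shows "ennreal (f y) * (\<integral>\<^sup>+x. g x \<partial>reversed_kernel L w h f y) = ennreal (w y) * (\<integral>\<^sup>+x. h x * g x \<partial>L y)"
proof (cases "0 < f y")
  case True
  have "ennreal (w y) * (\<integral>\<^sup>+x. h x \<partial>L y) \<le> f y"
    using balance mult_right_mono[OF \<open>lam \<le> 1\<close>, of "ennreal (f y)"] by simp
  then have "ennreal (f y) * (\<integral>\<^sup>+x. g x \<partial>reversed_kernel L w h f y)
      = ennreal (f y) * ennreal (w y / f y) * (\<integral>\<^sup>+x. h x * g x \<partial>L y)"
    using True by (simp add: nn_integral_reversed_kernel mult.assoc)
  also have "ennreal (f y) * ennreal (w y / f y) = ennreal (w y)"
    using True by (simp add: ennreal_mult'[symmetric])
  finally show ?thesis .
next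
  case False
  then have "f y = 0"
    using \<open>0 \<le> f y\<close> by simp
  then have "ennreal (w y) = 0 \<or> (\<integral>\<^sup>+x. h x \<partial>L y) = 0"
    using balance by simp
  moreover have "(\<integral>\<^sup>+x. h x * g x \<partial>L y) = 0" if "(\<integral>\<^sup>+x. h x \<partial>L y) = 0"
  proof -
    have "AE x in L y. ennreal (h x) = 0"
      using that by (simp add: nn_integral_0_iff_AE)
    then have "AE x in L y. ennreal (h x) * g x = 0"
      by (rule eventually_mono) simp
    then show ?thesis
      by (simp add: nn_integral_0_iff_AE)
  qed
  ultimately show ?thesis
    using \<open>f y = 0\<close> by auto
qed

lemma measure_reversed_kernel_ratio:
  assumes "0 < f y" "ennreal (w y) * (\<integral>\<^sup>+x. h x \<partial>L y) \<le> f y" "0 < w y"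
    and [measurable]: "h \<in> borel_measurable (L y)" "A \<in> sets (L y)"
  shows "measure (reversed_kernel L w h f y) A / measure (reversed_kernel L w h f y) (space (L y))
    = measure (density (L y) h) A / measure (density (L y) h) (space (L y))"
proof -
  have "measure (reversed_kernel L w h f y) B = w y / f y * measure (density (L y) h) B"
    if [measurable]: "B \<in> sets (L y)" for B
  proof -
    have "emeasure (reversed_kernel L w h f y) B = ennreal (w y / f y) * emeasure (density (L y) h) B"
      using emeasure_reversed_kernel[where L=L and y=y, OF that assms(4)] assms(1,2) by (simp add: emeasure_density)
    then show ?thesis
      using assms(1,3) by (simp add: measure_def enn2real_mult)
  qed
  then show ?thesis
    using assms(1,3,5) by simp
qed

text \<open>
  The assumption \<open>adjoint\<close> of this locale says \<open>f(x) \<Lambda>(dx) K(x,dy) = w(y) \<Lambda>(dy) h(x) L(y,dx)\<close>.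
\<close>

locale weighted_adjoint =
  fixes Lam :: "'a::topological_space measure" and K L :: "'a \<Rightarrow> 'a measure" and f w h :: "'a \<Rightarrow> real"
  assumes sets_Lam: "sets Lam = sets borel"
    and sigma_finite_Lam: "sigma_finite_measure Lam"
    and K[measurable]: "K \<in> borel \<rightarrow>\<^sub>M subprob_algebra borel"
    and L[measurable]: "L \<in> borel \<rightarrow>\<^sub>M subprob_algebra borel"
    and f[measurable]: "f \<in> borel_measurable borel" and w[measurable]: "w \<in> borel_measurable borel"
    and h[measurable]: "h \<in> borel_measurable borel"
    and f_nonneg: "\<And>x. 0 \<le> f x"
    and adjoint: "\<And>g. g \<in> borel_measurable (borel \<Otimes>\<^sub>M borel) \<Longrightarrow>
      kernel_integral Lam (\<lambda>x. ennreal (f x)) K g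
        = kernel_integral Lam (\<lambda>y. ennreal (w y)) L (\<lambda>z. ennreal (h (snd z)) * g (prod.swap z))"
begin

lemma measurable_Lam: "Lam \<rightarrow>\<^sub>M N = borel \<rightarrow>\<^sub>M N"
  using measurable_cong_sets[OF sets_Lam refl] .

lemma nn_integral_density_kernel:
  assumes [measurable]: "g \<in> borel_measurable (borel \<Otimes>\<^sub>M borel)"
  shows "(\<integral>\<^sup>+x. (\<integral>\<^sup>+y. g (x, y) \<partial>K x) \<partial>density Lam f) = kernel_integral Lam (\<lambda>x. ennreal (f x)) K g"
  unfolding kernel_integral_def measurable_Lam by (rule nn_integral_density) (simp_all add: measurable_Lam)

lemma AE_balance_if_quasi_stationary:
  fixes lam :: ennreal
  assumes QS: "\<And>A. A \<in> sets borel \<Longrightarrow>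
      (\<integral>\<^sup>+x. emeasure (K x) A \<partial>density Lam f) = lam * emeasure (density Lam f) A"
  shows "AE y in Lam. ennreal (w y) * (\<integral>\<^sup>+x. h x \<partial>L y) = lam * f y"
proof (rule sigma_finite_measure.density_unique2[OF sigma_finite_Lam])
  show "(\<lambda>y. ennreal (w y) * (\<integral>\<^sup>+x. h x \<partial>L y)) \<in> borel_measurable Lam"
    "(\<lambda>y. lam * ennreal (f y)) \<in> borel_measurable Lam"
    unfolding measurable_Lam by measurable
next
  fix A assume A_Lam: "A \<in> sets Lam"
  then have A[measurable]: "A \<in> sets borel"
    using sets_Lam by simp
  have "(\<integral>\<^sup>+y\<in>A. ennreal (w y) * (\<integral>\<^sup>+x. h x \<partial>L y) \<partial>Lam)
      = kernel_integral Lam (\<lambda>y. ennreal (w y)) L (\<lambda>z. ennreal (h (snd z)) * indicator (UNIV \<times> A) (prod.swap z))"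
    unfolding kernel_integral_def
    by (intro nn_integral_cong) (auto simp: indicator_def)
  also have "\<dots> = kernel_integral Lam (\<lambda>x. ennreal (f x)) K (indicator (UNIV \<times> A))"
    by (rule adjoint[symmetric]) simp
  also have "\<dots> = (\<integral>\<^sup>+x. emeasure (K x) A \<partial>density Lam f)"
    by (simp add: nn_integral_density_kernel[symmetric] indicator_times sets_kernel[OF K])
  also have "\<dots> = lam * (\<integral>\<^sup>+y\<in>A. f y \<partial>Lam)"
    using A_Lam by (simp add: QS emeasure_density measurable_Lam)
  also have "\<dots> = (\<integral>\<^sup>+y\<in>A. lam * ennreal (f y) \<partial>Lam)"
    by (simp add: nn_integral_cmult[symmetric] measurable_Lam mult.assoc)
  finally show "(\<integral>\<^sup>+y\<in>A. ennreal (w y) * (\<integral>\<^sup>+x. h x \<partial>L y) \<partial>Lam) = (\<integral>\<^sup>+y\<in>A. lam * ennreal (f y) \<partial>Lam)" .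
qed

lemma reversed_kernel_reversible:
  fixes lam :: ennreal
  assumes balance: "AE y in Lam. ennreal (w y) * (\<integral>\<^sup>+x. h x \<partial>L y) = lam * f y" and "lam \<le> 1"
    and C[measurable]: "C \<in> sets (borel \<Otimes>\<^sub>M borel)"
  shows "(\<integral>\<^sup>+x. (\<integral>\<^sup>+y. indicator C (x, y) \<partial>K x) \<partial>density Lam f)
    = (\<integral>\<^sup>+y. (\<integral>\<^sup>+x. indicator C (x, y) \<partial>reversed_kernel L w h f y) \<partial>density Lam f)"
proof -
  have R: "reversed_kernel L w h f \<in> borel \<rightarrow>\<^sub>M subprob_algebra borel"
    by (rule measurable_reversed_kernel) measurable
  have [measurable]: "(\<lambda>y. \<integral>\<^sup>+x. indicator C (x, y) \<partial>reversed_kernel L w h f y) \<in> borel_measurable borel"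
    using measurable_kernel_nn_integral[OF R, of "\<lambda>z. indicator C (prod.swap z)"] by simp
  have measurable_L: "L y \<rightarrow>\<^sub>M N = borel \<rightarrow>\<^sub>M N" for y N
    using subprob_measurableD(3)[OF L] by simp
  have "(\<integral>\<^sup>+x. (\<integral>\<^sup>+y. indicator C (x, y) \<partial>K x) \<partial>density Lam f)
      = kernel_integral Lam (\<lambda>y. ennreal (w y)) L (\<lambda>z. ennreal (h (snd z)) * indicator C (prod.swap z))"
    by (simp add: nn_integral_density_kernel adjoint)
  also have "\<dots> = (\<integral>\<^sup>+y. ennreal (f y) * (\<integral>\<^sup>+x. indicator C (x, y) \<partial>reversed_kernel L w h f y) \<partial>Lam)"
    unfolding kernel_integral_def using balance
  proof (intro nn_integral_cong_AE, elim eventually_mono)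
    fix y assume "ennreal (w y) * (\<integral>\<^sup>+x. h x \<partial>L y) = lam * f y"
    then have "ennreal (f y) * (\<integral>\<^sup>+x. indicator C (x, y) \<partial>reversed_kernel L w h f y)
        = ennreal (w y) * (\<integral>\<^sup>+x. ennreal (h x) * indicator C (x, y) \<partial>L y)"
      using \<open>lam \<le> 1\<close> f_nonneg by (intro reversed_kernel_balance) (simp_all add: measurable_L)
    then show "ennreal (w y) * (\<integral>\<^sup>+x. ennreal (h (snd (y, x))) * indicator C (prod.swap (y, x)) \<partial>L y)
        = ennreal (f y) * (\<integral>\<^sup>+x. indicator C (x, y) \<partial>reversed_kernel L w h f y)"
      by simp
  qed
  also have "\<dots> = (\<integral>\<^sup>+y. (\<integral>\<^sup>+x. indicator C (x, y) \<partial>reversed_kernel L w h f y) \<partial>density Lam f)"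
    by (rule nn_integral_density[symmetric]) (simp_all add: measurable_Lam)
  finally show ?thesis .
qed

end

section \<open>The adjoint Dobrushin setting\<close>

text \<open>
  \<open>K\<close> is \<open>P\<^sub>t\<^sub>0\<close> and \<open>Kt\<close> the adjoint kernel \<open>P\<^sup>~\<close>; \<open>f_sup\<close>, \<open>nu'_f\<close>, \<open>psi_sup\<close>, \<open>inv_psi_sup\<close> stand for
  \<open>\<parallel>f\<parallel>\<^sub>L\<^sub>\<infinity>\<^sub>(\<^sub>\<Lambda>\<^sub>)\<close>, \<open>\<nu>'(f)\<close>, \<open>\<parallel>\<psi>\<parallel>\<^sub>\<infinity>\<close>, \<open>\<parallel>1/\<psi>\<parallel>\<^sub>\<infinity>\<close>.
\<close>

locale adjoint_dobrushin =
  fixes Lam :: "'a::topological_space measure" and K Kt :: "'a \<Rightarrow> 'a measure"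
    and f psi :: "'a \<Rightarrow> real" and a c0' :: real and nu' :: "'a measure"
  assumes sets_Lam: "sets Lam = sets borel"
    and sigma_finite_Lam: "sigma_finite_measure Lam"
    and Lam_nonzero: "emeasure Lam (space Lam) \<noteq> 0"
    and K_kernel: "submarkov_kernel K"
    and f_meas[measurable]: "f \<in> borel_measurable borel"
    and f_nonneg: "\<And>x. f x \<ge> 0"
    and prob_qsd: "prob_space (density Lam (\<lambda>x. ennreal (f x)))"
    and f_Linf: "esssup Lam (\<lambda>x. ereal (f x)) < \<infinity>"
    and quasi_stationary: "\<And>A. A \<in> sets borel \<Longrightarrow>
      (\<integral>\<^sup>+x. emeasure (K x) A \<partial>density Lam f)
        = (\<integral>\<^sup>+x. emeasure (K x) UNIV \<partial>density Lam f) * emeasure (density Lam f) A"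
    and psi_meas[measurable]: "psi \<in> borel_measurable borel"
    and psi_bdd: "\<exists>M. \<forall>x. \<bar>psi x\<bar> \<le> M"
    and psi_inf: "\<exists>c>0. \<forall>x. psi x \<ge> c"
    and a_pos: "a > 0"
    and Kt_kernel: "submarkov_kernel Kt"
    and adjoint: "\<forall>C\<in>sets (borel \<Otimes>\<^sub>M borel).
        (\<integral>\<^sup>+x. ennreal (psi x) * (\<integral>\<^sup>+y. indicator C (x,y) \<partial>K x) \<partial>Lam)
      = (\<integral>\<^sup>+y. ennreal (a * psi y) * (\<integral>\<^sup>+x. indicator C (x,y) \<partial>Kt y) \<partial>Lam)"
    and Kt_pos: "AE y in Lam. emeasure (Kt y) UNIV > 0"
    and c0'_pos: "c0' > 0"
    and nu'_prob: "prob_space nu'"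
    and nu'_sets: "sets nu' = sets borel"
    and nu'_not_singular: "\<not> mutually_singular nu' (density Lam (\<lambda>x. ennreal (f x)))"
    and minor: "AE y in Lam. \<forall>A\<in>sets borel.
        measure (Kt y) A / measure (Kt y) UNIV \<ge> c0' * measure nu' A"
begin

definition f_sup :: real where
  "f_sup = real_of_ereal (esssup Lam (\<lambda>x. ereal (f x)))"

definition nu'_f :: real where
  "nu'_f = (\<integral>x. f x \<partial>nu')"

definition psi_sup :: real where
  "psi_sup = (SUP x. \<bar>psi x\<bar>)"

definition inv_psi_sup :: real where
  "inv_psi_sup = (SUP x. \<bar>1 / psi x\<bar>)"

definition c0 :: real where
  "c0 = c0' * nu'_f / (psi_sup * inv_psi_sup * f_sup)"

definition nu :: "'a measure" where
  "nu = density nu' (\<lambda>x. ennreal (f x / nu'_f))"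

sublocale nu': prob_space nu'
  by (rule nu'_prob)

lemma K[measurable]: "K \<in> borel \<rightarrow>\<^sub>M subprob_algebra borel"
  using K_kernel unfolding submarkov_kernel_def .

lemma Kt[measurable]: "Kt \<in> borel \<rightarrow>\<^sub>M subprob_algebra borel"
  using Kt_kernel unfolding submarkov_kernel_def .

lemma sets_Kt: "sets (Kt y) = sets borel"
  using sets_kernel[OF Kt] by simp

lemma space_Kt: "space (Kt y) = UNIV"
  using sets_eq_imp_space_eq[OF sets_Kt] by simp

lemma measurable_Kt: "Kt y \<rightarrow>\<^sub>M N = borel \<rightarrow>\<^sub>M N"
  using measurable_cong_sets[OF sets_Kt refl] .

lemma subprob_space_Kt: "subprob_space (Kt y)"
  using subprob_space_kernel[OF Kt] by simp

lemma space_Lam: "space Lam = UNIV"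
  using sets_eq_imp_space_eq[OF sets_Lam] by simp

lemma psi_pos: "0 < psi x"
  using psi_inf by (auto intro: less_le_trans)

lemma adjoint_kernel_integral:
  "C \<in> sets (borel \<Otimes>\<^sub>M borel) \<Longrightarrow>
    kernel_integral Lam (\<lambda>x. ennreal (psi x)) K (indicator C)
      = kernel_integral Lam (\<lambda>y. ennreal (a * psi y)) Kt (\<lambda>z. indicator C (prod.swap z))"
  using adjoint by (simp add: kernel_integral_def)

sublocale weighted_adjoint Lam K Kt f "\<lambda>y. a * psi y" "\<lambda>x. f x / psi x"
proof (rule weighted_adjoint.intro)
  fix g :: "'a \<times> 'a \<Rightarrow> ennreal" assume [measurable]: "g \<in> borel_measurable (borel \<Otimes>\<^sub>M borel)"
  have "kernel_integral Lam (\<lambda>x. ennreal (f x)) K g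
      = kernel_integral Lam (\<lambda>x. ennreal (psi x) * ennreal (f x / psi x)) K g"
    using psi_pos f_nonneg by (simp add: ennreal_mult'[symmetric] less_imp_le less_imp_neq[symmetric])
  also have "\<dots> = kernel_integral Lam (\<lambda>x. ennreal (psi x)) K (\<lambda>z. ennreal (f (fst z) / psi (fst z)) * g z)"
    by (rule kernel_integral_mult_fst[OF sets_Lam _ K, symmetric]) measurable
  also have "\<dots> = kernel_integral Lam (\<lambda>y. ennreal (a * psi y)) Kt
      (\<lambda>z. ennreal (f (snd z) / psi (snd z)) * g (prod.swap z))"
    using kernel_integral_adjoint[OF sets_Lam _ _ K Kt adjoint_kernel_integral] by simp
  finally show "kernel_integral Lam (\<lambda>x. ennreal (f x)) K g = kernel_integral Lam (\<lambda>y. ennreal (a * psi y)) Kt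
      (\<lambda>z. ennreal (f (snd z) / psi (snd z)) * g (prod.swap z))" .
qed (simp_all add: sets_Lam sigma_finite_Lam f_nonneg)

lemma AE_Kt_null: "N \<in> null_sets Lam \<Longrightarrow> AE y in Lam. emeasure (Kt y) N = 0"
  using mult_pos_pos[OF a_pos psi_pos]
  by (intro AE_kernel_null_if_adjoint[OF sets_Lam _ _ K Kt adjoint_kernel_integral])
     (auto simp: ennreal_eq_0_iff not_le)

lemma absolutely_continuous_nu': "absolutely_continuous Lam nu'"
proof (rule absolutely_continuous_if_minorized[OF Lam_nonzero nu'.finite_measure_axioms _ AE_Kt_null _ c0'_pos])
  show "sets nu' = sets Lam"
    using nu'_sets sets_Lam by simp
  show "AE y in Lam. \<forall>A\<in>sets nu'. c0' * measure nu' A \<le> measure (Kt y) A / measure (Kt y) (space (Kt y))"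
    using minor by (simp add: nu'_sets space_Kt)
qed

lemma c0'_le_1: "c0' \<le> 1"
proof -
  obtain y where y_pos: "0 < emeasure (Kt y) UNIV"
    and y_minor: "\<forall>A\<in>sets borel. c0' * measure nu' A \<le> measure (Kt y) A / measure (Kt y) UNIV"
    using AE_imp_ex[OF Lam_nonzero AE_conjI[OF Kt_pos minor]] by blast
  interpret Kty: subprob_space "Kt y"
    by (rule subprob_space_Kt)
  show ?thesis
  proof (rule minorization_constant_le_1[OF nu'_prob Kty.finite_measure_axioms])
    show "sets nu' = sets (Kt y)"
      using nu'_sets sets_Kt by simp
    show "0 < measure (Kt y) (space (Kt y))"
      using y_pos by (simp add: space_Kt Kty.emeasure_eq_measure)
    show "\<forall>A\<in>sets (Kt y). c0' * measure nu' A \<le> measure (Kt y) A / measure (Kt y) (space (Kt y))"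
      using y_minor by (simp add: space_Kt sets_Kt)
  qed
qed

lemma AE_f_le_f_sup: "AE x in Lam. f x \<le> f_sup"
  and f_sup_pos: "0 < f_sup"
proof -
  let ?E = "esssup Lam (\<lambda>x. ereal (f x))"
  have AE_E: "AE x in Lam. ereal (f x) \<le> ?E"
    by (rule esssup_AE)
  have "0 \<le> ?E"
    using AE_imp_ex[OF Lam_nonzero AE_E] f_nonneg by (meson ereal_less_eq(5) order_trans)
  then have E_eq: "?E = ereal f_sup"
    using f_Linf unfolding f_sup_def by (cases ?E) auto
  then show AE_f: "AE x in Lam. f x \<le> f_sup"
    using AE_E by simp
  show "0 < f_sup"
  proof (rule ccontr)
    assume "\<not> 0 < f_sup"
    then have "AE x in Lam. ennreal (f x) = 0"
      using AE_f by (auto elim!: eventually_mono simp: ennreal_eq_0_iff)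
    then have "emeasure (density Lam (\<lambda>x. ennreal (f x))) (space Lam) = 0"
      by (simp add: emeasure_density nn_integral_0_iff_AE measurable_Lam)
    then show False
      using prob_space.emeasure_space_1[OF prob_qsd] by simp
  qed
qed

lemma AE_nu'_f_le_f_sup: "AE x in nu'. f x \<le> f_sup"
  using absolutely_continuous_nu' AE_f_le_f_sup
  by (rule absolutely_continuous_AE[rotated]) (simp add: nu'_sets sets_Lam)

lemma integrable_nu'_f: "integrable nu' f"
proof (rule nu'.integrable_const_bound)
  show "AE x in nu'. norm (f x) \<le> f_sup"
    using AE_nu'_f_le_f_sup f_nonneg by (auto elim!: eventually_mono)
qed (simp add: measurable_cong_sets[OF nu'_sets refl])

lemma nu'_f_pos: "0 < nu'_f"
  unfolding nu'_f_def using nu'_sets sets_Lam f_nonneg integrable_nu'_f nu'_not_singular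
  by (intro integral_pos_if_not_mutually_singular) (simp_all add: measurable_Lam)

lemma nu'_f_le_f_sup: "nu'_f \<le> f_sup"
proof -
  have "nu'_f \<le> (\<integral>x. f_sup \<partial>nu')"
    unfolding nu'_f_def by (rule integral_mono_AE[OF integrable_nu'_f _ AE_nu'_f_le_f_sup]) simp
  then show ?thesis
    by (simp add: nu'.prob_space)
qed

lemma psi_le_psi_sup: "psi x \<le> psi_sup"
proof -
  obtain M where "\<forall>x. \<bar>psi x\<bar> \<le> M"
    using psi_bdd by blast
  then have bdd: "bdd_above (range (\<lambda>x. \<bar>psi x\<bar>))"
    by (auto intro: bdd_aboveI)
  show ?thesis
    unfolding psi_sup_def by (rule order_trans[OF abs_ge_self cSUP_upper[OF UNIV_I bdd]])
qed

lemma inv_psi_le_inv_psi_sup: "1 / psi x \<le> inv_psi_sup"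
proof -
  obtain c where "0 < c" "\<forall>x. c \<le> psi x"
    using psi_inf by blast
  then have bdd: "bdd_above (range (\<lambda>x. \<bar>1 / psi x\<bar>))"
    using psi_pos by (intro bdd_aboveI[where M="1 / c"]) (auto simp: abs_of_pos intro!: divide_left_mono)
  show ?thesis
    unfolding inv_psi_sup_def by (rule order_trans[OF abs_ge_self cSUP_upper[OF UNIV_I bdd]])
qed

lemma psi_sup_pos: "0 < psi_sup"
  using psi_pos psi_le_psi_sup by (rule less_le_trans)

lemma inv_psi_sup_pos: "0 < inv_psi_sup"
proof -
  have "0 < 1 / psi x" for x
    using psi_pos by simp
  then show ?thesis
    using inv_psi_le_inv_psi_sup by (rule less_le_trans)
qed

lemma one_le_psi_sups: "1 \<le> psi_sup * inv_psi_sup"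
proof -
  have "1 = psi undefined * (1 / psi undefined)"
    using psi_pos[of undefined] by simp
  also have "\<dots> \<le> psi_sup * inv_psi_sup"
    using psi_pos psi_sup_pos psi_le_psi_sup inv_psi_le_inv_psi_sup by (intro mult_mono) (auto intro: less_imp_le)
  finally show ?thesis .
qed

lemma c0_pos: "0 < c0"
  unfolding c0_def
  using c0'_pos nu'_f_pos psi_sup_pos inv_psi_sup_pos f_sup_pos by simp

lemma c0_le_1: "c0 \<le> 1"
proof -
  have "c0' * nu'_f \<le> 1 * f_sup"
    using c0'_le_1 nu'_f_le_f_sup c0'_pos nu'_f_pos by (intro mult_mono) auto
  also have "\<dots> \<le> psi_sup * inv_psi_sup * f_sup"
    using one_le_psi_sups f_sup_pos by (intro mult_right_mono) auto
  finally show ?thesis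
    unfolding c0_def using psi_sup_pos inv_psi_sup_pos f_sup_pos by simp
qed

lemma prob_space_nu: "prob_space nu"
  unfolding nu_def nu'_f_def
  using nu'_prob integrable_nu'_f nu'_f_pos f_nonneg
  by (intro prob_space_density_normalized) (simp_all add: nu'_f_def measurable_cong_sets[OF nu'_sets refl])

abbreviation R :: "'a \<Rightarrow> 'a measure" where
  "R \<equiv> reversed_kernel Kt (\<lambda>y. a * psi y) (\<lambda>x. f x / psi x) f"

lemma f_nu'_le_weight: "f x / nu'_f \<le> psi_sup / nu'_f * (f x / psi x)"
  using mult_left_mono[OF psi_le_psi_sup f_nonneg, of x] psi_pos[of x] nu'_f_pos
  by (simp add: field_simps mult.commute)

lemma weight_le_if_f_le_f_sup: "f x \<le> f_sup \<Longrightarrow> f x / psi x \<le> f_sup * inv_psi_sup"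
  using mult_mono[of "f x" f_sup "1 / psi x" inv_psi_sup] f_nonneg[of x] psi_pos[of x]
    inv_psi_le_inv_psi_sup f_sup_pos
  by simp

lemma reversed_kernel_minorized:
  assumes good: "0 < f y" "ennreal (a * psi y) * (\<integral>\<^sup>+x. f x / psi x \<partial>Kt y) \<le> f y"
    and minor_y: "\<forall>A\<in>sets borel. c0' * measure nu' A \<le> measure (Kt y) A / measure (Kt y) UNIV"
    and pos_y: "0 < emeasure (Kt y) UNIV"
    and bound_y: "AE x in Kt y. f x \<le> f_sup"
    and A[measurable]: "A \<in> sets borel"
  shows "c0 * measure nu A \<le> measure (R y) A / measure (R y) UNIV"
proof -
  interpret Kty: subprob_space "Kt y"
    by (rule subprob_space_Kt)
  let ?k = "psi_sup / nu'_f" and ?B = "f_sup * inv_psi_sup"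
  let ?ratio = "measure (density (Kt y) (\<lambda>x. f x / psi x)) A
    / measure (density (Kt y) (\<lambda>x. f x / psi x)) (space (Kt y))"
  have kB_pos: "0 < ?k * ?B"
    using psi_sup_pos nu'_f_pos f_sup_pos inv_psi_sup_pos by simp
  have bound: "c0' * measure nu A \<le> ?k * ?B * ?ratio"
    unfolding nu_def
  proof (rule density_ratio_ge_if_minorized[OF Kty.finite_measure_axioms nu'.finite_measure_axioms])
    show "c0' * measure nu' B \<le> measure (Kt y) B / measure (Kt y) (space (Kt y))" if "B \<in> sets (Kt y)" for B
      using minor_y that by (simp add: sets_Kt space_Kt)
    show "0 < measure (Kt y) (space (Kt y))"
      using pos_y by (simp add: space_Kt Kty.emeasure_eq_measure)
    show "AE x in Kt y. f x / psi x \<le> ?B"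
      using bound_y by (rule eventually_mono) (rule weight_le_if_f_le_f_sup)
  qed (use c0'_pos psi_sup_pos nu'_f_pos f_sup_pos inv_psi_sup_pos f_nu'_le_weight in
       \<open>simp_all add: measurable_Kt sets_Kt nu'_sets\<close>)
  have "c0 * measure nu A = c0' * measure nu A / (?k * ?B)"
    unfolding c0_def using nu'_f_pos by (simp add: field_simps)
  also have "\<dots> \<le> ?ratio"
    unfolding pos_divide_le_eq[OF kB_pos] using bound by (metis mult.commute)
  also have "?ratio = measure (R y) A / measure (R y) (space (Kt y))"
    using good mult_pos_pos[OF a_pos psi_pos]
    by (intro measure_reversed_kernel_ratio[where w="\<lambda>y. a * psi y" and L=Kt, symmetric])
       (simp_all add: measurable_Kt sets_Kt)
  finally show ?thesis
    by (simp add: space_Kt)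
qed

lemma AE_minorized_reversed_kernel:
  fixes lam :: ennreal
  assumes balance: "AE y in Lam. ennreal (a * psi y) * (\<integral>\<^sup>+x. f x / psi x \<partial>Kt y) = lam * f y"
    and "lam \<le> 1"
  shows "AE y in density Lam f. \<forall>A\<in>sets borel. measure (R y) A / measure (R y) UNIV \<ge> c0 * measure nu A"
proof -
  obtain N where N_sub: "{x\<in>space Lam. \<not> f x \<le> f_sup} \<subseteq> N"
    and "emeasure Lam N = 0" "N \<in> sets Lam"
    using AE_f_le_f_sup by (rule AE_E)
  then have N_null: "N \<in> null_sets Lam"
    by (intro null_setsI)
  have "AE y in Lam. 0 < f y \<longrightarrow> (\<forall>A\<in>sets borel. c0 * measure nu A \<le> measure (R y) A / measure (R y) UNIV)"
    using balance minor Kt_pos AE_Kt_null[OF N_null]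
  proof eventually_elim
    case (elim y)
    show ?case
    proof (intro impI ballI)
      fix A :: "'a set" assume "0 < f y" "A \<in> sets borel"
      have "lam * ennreal (f y) \<le> 1 * ennreal (f y)"
        using \<open>lam \<le> 1\<close> by (rule mult_right_mono) simp
      then have good: "ennreal (a * psi y) * (\<integral>\<^sup>+x. f x / psi x \<partial>Kt y) \<le> f y"
        using elim(1) by simp
      have "N \<in> null_sets (Kt y)"
        using elim(4) \<open>N \<in> sets Lam\<close> sets_kernel[OF Kt] sets_Lam by (intro null_setsI) simp_all
      then have "AE x in Kt y. f x \<le> f_sup"
        by (rule AE_not_in[THEN eventually_mono]) (use N_sub space_Lam in blast)
      then show "c0 * measure nu A \<le> measure (R y) A / measure (R y) UNIV"
        using \<open>0 < f y\<close> good elim(2,3) \<open>A \<in> sets borel\<close> by (intro reversed_kernel_minorized) simp_all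
    qed
  qed
  moreover have "(\<lambda>x. ennreal (f x)) \<in> borel_measurable Lam"
    by (simp add: measurable_Lam)
  ultimately show ?thesis
    by (simp add: AE_density)
qed

lemma reverse_dobrushin: "reverse_dobrushin K (density Lam f) c0 nu"
proof -
  define lam where "lam = (\<integral>\<^sup>+x. emeasure (K x) UNIV \<partial>density Lam f)"
  have "lam \<le> (\<integral>\<^sup>+x. 1 \<partial>density Lam f)"
    unfolding lam_def using subprob_space.subprob_emeasure_le_1[OF subprob_space_kernel[OF K]]
    by (intro nn_integral_mono) simp
  also have "\<dots> = 1"
    using prob_space.emeasure_space_1[OF prob_qsd] by simp
  finally have "lam \<le> 1" .
  have balance: "AE y in Lam. ennreal (a * psi y) * (\<integral>\<^sup>+x. f x / psi x \<partial>Kt y) = lam * f y"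
    using quasi_stationary unfolding lam_def by (rule AE_balance_if_quasi_stationary)
  show ?thesis
    unfolding reverse_dobrushin_def
  proof (intro exI[of _ R] conjI ballI)
    show "submarkov_kernel R"
      unfolding submarkov_kernel_def by (rule measurable_reversed_kernel) measurable
  next
    fix C :: "('a \<times> 'a) set" assume "C \<in> sets (borel \<Otimes>\<^sub>M borel)"
    then show "(\<integral>\<^sup>+x. (\<integral>\<^sup>+y. indicator C (x, y) \<partial>K x) \<partial>density Lam f)
        = (\<integral>\<^sup>+y. (\<integral>\<^sup>+x. indicator C (x, y) \<partial>R y) \<partial>density Lam f)"
      by (rule reversed_kernel_reversible[OF balance \<open>lam \<le> 1\<close>])
  qed (rule AE_minorized_reversed_kernel[OF balance \<open>lam \<le> 1\<close>])
qed


end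

theorem mainTheorem6:
  fixes Lam :: "'a::metric_space measure"
    and T :: "real set"
    and P :: "real \<Rightarrow> 'a \<Rightarrow> 'a measure"
    and qsd :: "'a measure"
    and f :: "'a \<Rightarrow> real"
    and psi :: "'a \<Rightarrow> real"
    and t0 a c0' :: real
    and Pt :: "'a \<Rightarrow> 'a measure"
    and nu' :: "'a measure"
  assumes Lam_sets: "sets Lam = sets borel"
    and Lam_sigma: "sigma_finite_measure Lam"
    and Lam_support: "\<And>U. open U \<Longrightarrow> U \<noteq> {} \<Longrightarrow> emeasure Lam U > 0"
    and T_time: "T = \<nat> \<or> T = {0..}"
    and P_kernel: "\<And>t. t \<in> T \<Longrightarrow> submarkov_kernel (P t)"
    and P_semigroup: "\<And>s t x A. s \<in> T \<Longrightarrow> t \<in> T \<Longrightarrow> A \<in> sets borel \<Longrightarrow>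
        emeasure (P (s + t) x) A = (\<integral>\<^sup>+y. emeasure (P t y) A \<partial>P s x)"
    and pi_prob: "prob_space qsd"
    and f_meas: "f \<in> borel_measurable borel"
    and f_nonneg: "\<And>x. f x \<ge> 0"
    and pi_dens: "qsd = density Lam (\<lambda>x. ennreal (f x))"
    and f_Linf: "esssup Lam (\<lambda>x. ereal (f x)) < \<infinity>"
    and QSD: "\<And>t. t \<in> T \<Longrightarrow>
        (\<integral>\<^sup>+x. emeasure (P t x) UNIV \<partial>qsd) > 0 \<and>
        (\<forall>A\<in>sets borel. (\<integral>\<^sup>+x. emeasure (P t x) A \<partial>qsd)
                          = (\<integral>\<^sup>+x. emeasure (P t x) UNIV \<partial>qsd) * emeasure qsd A)"
    and psi_meas: "psi \<in> borel_measurable borel"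
    and psi_bdd: "\<exists>M. \<forall>x. \<bar>psi x\<bar> \<le> M"
    and psi_inf: "\<exists>c>0. \<forall>x. psi x \<ge> c"
    and t0_pos: "t0 > 0" and t0_T: "t0 \<in> T"
    and a_pos: "a > 0"
    and Pt_kernel: "submarkov_kernel Pt"
    and adjoint: "\<forall>C\<in>sets (borel \<Otimes>\<^sub>M borel).
        (\<integral>\<^sup>+x. ennreal (psi x) * (\<integral>\<^sup>+y. indicator C (x,y) \<partial>P t0 x) \<partial>Lam)
      = (\<integral>\<^sup>+y. ennreal (a * psi y) * (\<integral>\<^sup>+x. indicator C (x,y) \<partial>Pt y) \<partial>Lam)"
    and Pt_pos: "AE y in Lam. emeasure (Pt y) UNIV > 0"
    and c0'_pos: "c0' > 0"
    and nu'_prob: "prob_space nu'"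
    and nu'_sets: "sets nu' = sets borel"
    and nu'_not_sing: "\<not> mutually_singular nu' qsd"
    and minor: "AE y in Lam. \<forall>A\<in>sets borel.
        measure (Pt y) A / measure (Pt y) UNIV \<ge> c0' * measure nu' A"
  shows "absolutely_continuous Lam nu'
       \<and> (\<integral>x. f x \<partial>nu') > 0
       \<and> (let nf = (\<integral>x. f x \<partial>nu');
              c0 = c0' * nf /
                   ((SUP x. \<bar>psi x\<bar>) * (SUP x. \<bar>1 / psi x\<bar>)
                    * real_of_ereal (esssup Lam (\<lambda>x. ereal (f x))));
              nu = density nu' (\<lambda>x. ennreal (f x / nf))
          in 0 < c0 \<and> c0 \<le> 1 \<and> prob_space nu \<and>
             reverse_dobrushin (P t0) qsd c0 nu)"
proof -
  have "emeasure Lam (space Lam) \<noteq> 0"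
    using Lam_support[of UNIV] sets_eq_imp_space_eq[OF Lam_sets] by simp
  moreover have "\<And>A. A \<in> sets borel \<Longrightarrow> (\<integral>\<^sup>+x. emeasure (P t0 x) A \<partial>density Lam f)
      = (\<integral>\<^sup>+x. emeasure (P t0 x) UNIV \<partial>density Lam f) * emeasure (density Lam f) A"
    using QSD[OF t0_T] unfolding pi_dens by blast
  ultimately interpret adjoint_dobrushin Lam "P t0" Pt f psi a c0' nu'
    using Lam_sets Lam_sigma P_kernel[OF t0_T] f_meas f_nonneg pi_prob[unfolded pi_dens] f_Linf
      psi_meas psi_bdd psi_inf a_pos Pt_kernel adjoint Pt_pos c0'_pos nu'_prob nu'_sets
      nu'_not_sing[unfolded pi_dens] minor
    by (intro adjoint_dobrushin.intro)
  show ?thesis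
    using absolutely_continuous_nu' nu'_f_pos c0_pos c0_le_1 prob_space_nu reverse_dobrushin
    unfolding Let_def c0_def nu_def nu'_f_def psi_sup_def inv_psi_sup_def f_sup_def pi_dens
    by simp
qed

end
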